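(* Let $b=1/2$, let $\mathcal B$ be a Hamel basis of $\mathbb{R}$ over $\mathbb{Q}$ with $b\in\mathcal B$, and let $\pi:\mathbb{R}\to[0,1]$ be defined by $\pi(x)=\lambda^x_b-\lfloor\lambda^x_b\rfloor$ if $\lambda^x_b$ is not an odd integer, and $\pi(x)=1$ if $\lambda^x_b$ is an odd integer. Then $\pi$ is an extreme function for $I_b$: whenever $\pi_1,\pi_2:\mathbb{R}\to\mathbb{R}_+$ are valid functions for $I_b$ with $\pi=\tfrac12\pi_1+\tfrac12\pi_2$, we have $\pi_1=\pi_2=\pi$.
   Context: For $b\in\mathbb{R}\setminus\mathbb{Z}$, $I_b$ is the set of finite-support functions $y:\mathbb{R}\to\mathbb{Z}_+$ (i.e. $y(x)=0$ for all but finitely many $x$) such that $\sum_{x\in\mathbb{R}} y(x)\,x\equiv b \pmod 1$. A function $\pi:\mathbb{R}\to\mathbb{R}_+$ is a (nonnegative) valid function for $I_b$ if $\sum_{x\in\mathbb{R}}\pi(x)y(x)\ge 1$ for every $y\in I_b$. A Hamel basis is a basis of $\mathbb{R}$ as a vector space over $\mathbb{Q}$; for $x\in\mathbb{R}$, $\lambda^x_b\in\mathbb{Q}$ denotes the coefficient of the basis element $b$ in the unique expression of $x$ as a finite rational linear combination of elements of $\mathcal B$. *)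

theory Defs
  imports Complex_Main
begin

definition qscale :: "rat \<Rightarrow> real \<Rightarrow> real" where
  "qscale q x = of_rat q * x"

definition hamel_basis :: "real set \<Rightarrow> bool" where
  "hamel_basis B \<longleftrightarrow> \<not> module.dependent qscale B \<and> module.span qscale B = UNIV"

definition hamel_coeff :: "real set \<Rightarrow> real \<Rightarrow> real \<Rightarrow> rat" where
  "hamel_coeff B x b = module.representation qscale B x b"

definition I_set :: "real \<Rightarrow> (real \<Rightarrow> nat) set" where
  "I_set b = {y. finite {x. y x \<noteq> 0} \<and>
      (\<Sum>x\<in>{x. y x \<noteq> 0}. real (y x) * x) - b \<in> \<int>}"

definition valid_function :: "real \<Rightarrow> (real \<Rightarrow> real) \<Rightarrow> bool" where
  "valid_function b \<pi> \<longleftrightarrow> (\<forall>x. \<pi> x \<ge> 0) \<and>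
      (\<forall>y\<in>I_set b. (\<Sum>x\<in>{x. y x \<noteq> 0}. \<pi> x * real (y x)) \<ge> 1)"

definition extreme_function :: "real \<Rightarrow> (real \<Rightarrow> real) \<Rightarrow> bool" where
  "extreme_function b \<pi> \<longleftrightarrow> valid_function b \<pi> \<and>
      (\<forall>\<pi>1 \<pi>2. valid_function b \<pi>1 \<and> valid_function b \<pi>2 \<and>
         \<pi> = (\<lambda>x. (1/2) * \<pi>1 x + (1/2) * \<pi>2 x) \<longrightarrow> \<pi>1 = \<pi> \<and> \<pi>2 = \<pi>)"

end

theory Submission
  imports Defs
begin

text \<open>The coefficient functional \<open>L = \<lambda>\<^sup>x\<^sub>b\<close> is \<open>\<rat>\<close>-linear with \<open>L b = 1\<close>, so
  \<open>\<Sum> y(x) x \<equiv> 1/2 (mod 1)\<close> forces \<open>\<Sum> y(x) L x\<close> to be an odd integer, and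
  \<open>\<pi> = \<phi> \<circ> L\<close> for a function \<open>\<phi>\<close> on the rationals that agrees with \<open>id\<close> modulo 1 and
  vanishes only on even integers. Validity follows because \<open>\<Sum> y(x) \<phi>(L x)\<close> is then a
  nonnegative integer that cannot be \<open>0\<close>. For extremality, every point is placed in a
  list \<open>xs\<close> with \<open>\<Sum>\<pi>(xs) = 1\<close> and \<open>\<Sum>L(xs)\<close> odd; appending \<open>1/2 - \<Sum>xs\<close>, where \<open>\<pi>\<close>
  vanishes, gives an element of \<open>I\<^sub>b\<close> on which \<open>\<pi>\<close> is tight, so any valid \<open>\<pi>\<^sub>1\<close>, \<open>\<pi>\<^sub>2\<close>
  averaging to \<open>\<pi>\<close> are tight there as well. These equations, taken for the points with
  \<open>L = 1/q\<close> and \<open>L = 1 + 1/q\<close> and then for arbitrary points, determine \<open>\<pi>\<^sub>1 = \<pi>\<close>.\<close>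

lemma module_qscale: "module qscale"
  by unfold_locales (auto simp: qscale_def of_rat_add of_rat_mult algebra_simps)

lemma hamel_basis_independent_spanning:
  assumes "hamel_basis B"
  shows "\<not> module.dependent qscale B" "x \<in> module.span qscale B"
  using assms by (auto simp: hamel_basis_def)

lemma hamel_coeff_add:
  assumes "hamel_basis B"
  shows "hamel_coeff B (x + y) b = hamel_coeff B x b + hamel_coeff B y b"
  using module.representation_add[OF module_qscale, of B y x]
    hamel_basis_independent_spanning[OF assms]
  by (simp add: hamel_coeff_def)

lemma hamel_coeff_diff:
  assumes "hamel_basis B"
  shows "hamel_coeff B (x - y) b = hamel_coeff B x b - hamel_coeff B y b"
  using module.representation_diff[OF module_qscale, of B y x]
    hamel_basis_independent_spanning[OF assms]
  by (simp add: hamel_coeff_def)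

lemma hamel_coeff_of_rat_mult:
  assumes "hamel_basis B"
  shows "hamel_coeff B (of_rat r * x) b = r * hamel_coeff B x b"
  using module.representation_scale[OF module_qscale, of B x r]
    hamel_basis_independent_spanning[OF assms]
  by (simp add: hamel_coeff_def qscale_def)

lemma hamel_coeff_of_nat_mult:
  assumes "hamel_basis B"
  shows "hamel_coeff B (of_nat n * x) b = of_nat n * hamel_coeff B x b"
  using hamel_coeff_of_rat_mult[OF assms, of "of_nat n"] by simp

lemma hamel_coeff_self:
  assumes "hamel_basis B" "b \<in> B"
  shows "hamel_coeff B b b = 1"
  using module.representation_basis[OF module_qscale, of B b]
    hamel_basis_independent_spanning[OF assms(1)] assms(2)
  by (simp add: hamel_coeff_def)

lemma hamel_coeff_sum:
  assumes "hamel_basis B"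
  shows "hamel_coeff B (\<Sum>x\<in>S. f x) b = (\<Sum>x\<in>S. hamel_coeff B (f x) b)"
  using module.representation_sum[OF module_qscale, of B S f]
    hamel_basis_independent_spanning[OF assms]
  by (simp add: hamel_coeff_def)

lemma hamel_coeff_sum_list:
  assumes "hamel_basis B"
  shows "hamel_coeff B (sum_list xs) b = sum_list (map (\<lambda>x. hamel_coeff B x b) xs)"
  using hamel_coeff_sum[OF assms, of "(!) xs"] by (simp add: sum_list_sum_nth)

lemma rat_eq_of_int_add_fraction:
  fixes l :: rat
  assumes "l \<notin> \<int>"
  obtains n :: int and p q :: nat where "l = of_int n + of_nat p / of_nat q" "0 < p" "p < q"
proof -
  define f where "f = l - of_int \<lfloor>l\<rfloor>"
  have "f \<noteq> 0" using assms by (auto simp: f_def) (metis Ints_of_int)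
  moreover have "0 \<le> f" "f < 1" using floor_correct[of l] by (simp_all add: f_def)
  ultimately have f01: "0 < f" "f < 1" by simp_all
  obtain a b where ab: "quotient_of f = (a, b)" by (cases "quotient_of f")
  have "0 < b" "f = of_int a / of_int b"
    using quotient_of_denom_pos[OF ab] quotient_of_div[OF ab] by simp_all
  moreover from this f01 have "0 < a" "a < b"
    by (simp_all add: zero_less_divide_iff divide_less_eq)
  ultimately show ?thesis
    by (intro that[of "\<lfloor>l\<rfloor>" "nat a" "nat b"]) (auto simp: f_def algebra_simps)
qed

definition phi :: "rat \<Rightarrow> real" where
  "phi l = (if \<exists>k::int. l = of_int k \<and> odd k then 1 else of_rat (l - of_int \<lfloor>l\<rfloor>))"

lemma phi_eq_frac:
  "\<not> (\<exists>k::int. l = of_int k \<and> odd k) \<Longrightarrow> phi l = of_rat (l - of_int \<lfloor>l\<rfloor>)"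
  unfolding phi_def by (rule if_not_P)

lemma phi_of_int_odd: "odd k \<Longrightarrow> phi (of_int k) = 1"
  by (auto simp: phi_def)

lemma phi_of_int_even: "even k \<Longrightarrow> phi (of_int k) = 0"
  by (auto simp: phi_def)

lemma phi_of_int_add:
  assumes "0 < r" "r < 1"
  shows "phi (of_int j + r) = of_rat r"
proof -
  have "\<not> (\<exists>k::int. of_int j + r = of_int k \<and> odd k)"
  proof
    assume "\<exists>k::int. of_int j + r = of_int k \<and> odd k"
    then obtain k where k: "of_int j + r = of_int k" by blast
    with assms have "of_int j < (of_int k :: rat)" "of_int k < (of_int (j + 1) :: rat)" by auto
    then have "j < k" "k < j + 1" by (simp_all only: of_int_less_iff)
    then show False by linarith
  qed
  moreover have "\<lfloor>of_int j + r\<rfloor> = j" using assms by (simp add: floor_eq_iff)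
  ultimately show ?thesis by (simp add: phi_eq_frac)
qed

lemma phi_nonneg: "0 \<le> phi l"
  by (simp add: phi_def)

lemma phi_diff_Ints: "phi l - of_rat l \<in> \<int>"
proof (cases "\<exists>k::int. l = of_int k \<and> odd k")
  case True
  then obtain k where "l = of_int k" by blast
  then have "phi l - of_rat l = of_int (1 - k)" using True by (auto simp: phi_def)
  then show ?thesis by simp
next
  case False
  then have "phi l - of_rat l = of_int (- \<lfloor>l\<rfloor>)"
    by (simp add: phi_eq_frac[OF False] of_rat_diff)
  then show ?thesis by simp
qed

lemma phi_eq_0_imp_even:
  assumes "phi l = 0"
  shows "l / 2 \<in> \<int>"
proof -
  have not_odd: "\<not> (\<exists>k::int. l = of_int k \<and> odd k)"
    using assms phi_of_int_odd by fastforce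
  then have "l = of_int \<lfloor>l\<rfloor>" using assms by (simp add: phi_eq_frac)
  moreover from this not_odd obtain j where "\<lfloor>l\<rfloor> = 2 * j" by (metis evenE)
  ultimately have "l / 2 = of_int j" by simp
  then show ?thesis by simp
qed

text \<open>The weighted sum of \<open>phi\<close> differs from the odd integer \<open>\<Sum> n(x) l(x)\<close> by an
  integer, and the latter would be even if the former vanished.\<close>
lemma phi_sum_ge_1:
  assumes "finite S" and odd_sum: "(\<Sum>x\<in>S. of_nat (n x) * l x) = of_int (2 * k + 1)"
  shows "1 \<le> (\<Sum>x\<in>S. phi (l x) * of_nat (n x))"
proof -
  let ?s = "\<Sum>x\<in>S. phi (l x) * of_nat (n x)"
  have "(of_int (2 * k + 1) :: real) = of_rat (\<Sum>x\<in>S. of_nat (n x) * l x)"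
    by (metis odd_sum of_rat_of_int_eq)
  then have "?s - of_int (2 * k + 1) = (\<Sum>x\<in>S. (phi (l x) - of_rat (l x)) * of_nat (n x))"
    by (simp add: of_rat_sum of_rat_mult algebra_simps sum_subtractf)
  also have "\<dots> \<in> \<int>" using phi_diff_Ints by (intro Ints_sum Ints_mult) auto
  finally have "?s \<in> \<int>" by (metis Ints_add Ints_of_int diff_add_cancel)
  then obtain m where m: "?s = of_int m" by (auto elim: Ints_cases)
  have terms_nonneg: "\<And>x. 0 \<le> phi (l x) * of_nat (n x)" by (simp add: phi_nonneg)
  have "m \<noteq> 0"
  proof
    assume "m = 0"
    then have zero_terms: "\<forall>x\<in>S. phi (l x) * of_nat (n x) = 0"
      using sum_nonneg_eq_0_iff[OF assms(1), of "\<lambda>x. phi (l x) * of_nat (n x)"] terms_nonneg m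
      by simp
    have "of_nat (n x) * (l x / 2) \<in> \<int>" if "x \<in> S" for x
    proof (cases "n x = 0")
      case False
      then have "phi (l x) = 0" using zero_terms that by auto
      then show ?thesis by (rule Ints_mult[OF Ints_of_nat phi_eq_0_imp_even])
    qed simp
    then have "(\<Sum>x\<in>S. of_nat (n x) * (l x / 2)) \<in> \<int>" by (rule Ints_sum)
    then have "(\<Sum>x\<in>S. of_nat (n x) * l x) / 2 \<in> \<int>"
      by (simp add: sum_divide_distrib)
    then obtain j where "of_int (2 * k + 1) / 2 = (of_int j :: rat)"
      using odd_sum by (auto elim: Ints_cases)
    then have "of_int (2 * k + 1) = (of_int (2 * j) :: rat)" by simp
    then have "2 * k + 1 = 2 * j" by (simp only: of_int_eq_iff)
    then show False by presburger
  qed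
  moreover have "(0::real) \<le> of_int m" unfolding m[symmetric] by (rule sum_nonneg, rule terms_nonneg)
  ultimately show ?thesis using m by linarith
qed

lemma sum_list_map_eq_sum_of_count:
  fixes f :: "'a \<Rightarrow> 'b::semiring_1"
  assumes "set xs \<subseteq> X" and "finite X"
  shows "sum_list (map f xs) = (\<Sum>x\<in>X. of_nat (count_list xs x) * f x)"
  using assms(1)
proof (induction xs)
  case (Cons a xs)
  have "(\<Sum>x\<in>X. of_nat (count_list (a # xs) x) * f x) =
        (\<Sum>x\<in>X. of_nat (count_list xs x) * f x + (if a = x then f x else 0))"
    by (rule sum.cong) (auto simp: algebra_simps)
  also have "\<dots> = (\<Sum>x\<in>X. of_nat (count_list xs x) * f x) + f a"
    using Cons.prems assms(2) by (simp add: sum.distrib)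
  finally show ?case using Cons by (simp add: add.commute)
qed simp

lemma valid_function_sum_list_ge_1:
  assumes "valid_function b \<pi>" and "sum_list xs - b \<in> \<int>"
  shows "1 \<le> sum_list (map \<pi> xs)"
proof -
  have supp: "{x. count_list xs x \<noteq> 0} = set xs" by (auto simp: count_list_0_iff)
  have "(\<Sum>x\<in>set xs. real (count_list xs x) * x) = sum_list xs"
    using sum_list_map_eq_sum_of_count[of xs "set xs" "\<lambda>x. x"] by simp
  then have "count_list xs \<in> I_set b"
    using assms(2) unfolding I_set_def mem_Collect_eq supp by simp
  then have "1 \<le> (\<Sum>x\<in>set xs. \<pi> x * real (count_list xs x))"
    using assms(1) supp by (auto simp: valid_function_def)
  then show ?thesis by (simp add: sum_list_map_eq_sum_of_count[of xs "set xs"] mult.commute)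
qed

lemma valid_midpoint_zero:
  assumes "valid_function b \<pi>1" "valid_function b \<pi>2"
    and "\<pi> = (\<lambda>x. 1/2 * \<pi>1 x + 1/2 * \<pi>2 x)" and "\<pi> z = 0"
  shows "\<pi>1 z = 0"
  using assms by (auto simp: valid_function_def add_nonneg_eq_0_iff)

lemma valid_midpoint_tight:
  assumes "valid_function b \<pi>1" "valid_function b \<pi>2"
    and "\<pi> = (\<lambda>x. 1/2 * \<pi>1 x + 1/2 * \<pi>2 x)"
    and "sum_list xs - b \<in> \<int>" and "sum_list (map \<pi> xs) = 1"
  shows "sum_list (map \<pi>1 xs) = 1"
proof -
  have "sum_list (map \<pi> xs) = 1/2 * sum_list (map \<pi>1 xs) + 1/2 * sum_list (map \<pi>2 xs)"
    unfolding assms(3) by (induction xs) (simp_all add: algebra_simps)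
  then show ?thesis
    using assms valid_function_sum_list_ge_1[OF assms(1,4)] valid_function_sum_list_ge_1[OF assms(2,4)]
    by linarith
qed

lemma extreme_functionI:
  assumes "valid_function b \<pi>"
    and "\<And>\<pi>1 \<pi>2. valid_function b \<pi>1 \<Longrightarrow> valid_function b \<pi>2 \<Longrightarrow>
           \<pi> = (\<lambda>x. 1/2 * \<pi>1 x + 1/2 * \<pi>2 x) \<Longrightarrow> \<pi>1 = \<pi>"
  shows "extreme_function b \<pi>"
  unfolding extreme_function_def
proof (intro conjI allI impI assms(1))
  fix \<pi>1 \<pi>2
  assume h: "valid_function b \<pi>1 \<and> valid_function b \<pi>2 \<and> \<pi> = (\<lambda>x. 1/2 * \<pi>1 x + 1/2 * \<pi>2 x)"
  then show "\<pi>1 = \<pi>" using assms(2) by blast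
  have "\<pi> = (\<lambda>x. 1/2 * \<pi>2 x + 1/2 * \<pi>1 x)" using h by (simp add: add.commute)
  then show "\<pi>2 = \<pi>" using assms(2) h by blast
qed

locale half_coefficient_function =
  fixes B :: "real set" and \<pi> :: "real \<Rightarrow> real"
  assumes hamel: "hamel_basis B" and half_in_B: "1/2 \<in> B"
    and pi_eq: "\<And>x. \<pi> x = phi (hamel_coeff B x (1/2))"
begin

abbreviation L :: "real \<Rightarrow> rat" where
  "L x \<equiv> hamel_coeff B x (1/2)"

lemma L_half: "L (1/2) = 1"
  by (rule hamel_coeff_self[OF hamel half_in_B])

lemma L_of_rat_half: "L (of_rat r / 2) = r"
  using hamel_coeff_of_rat_mult[OF hamel, of r "1/2"] by (simp add: L_half)

lemma L_of_int: "L (of_int k) = of_int (2 * k)"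
  using L_of_rat_half[of "of_int (2 * k)"] by (simp add: of_rat_mult)

lemma L_unit_fraction: "L (1 / (2 * real q)) = 1 / of_nat q"
  using L_of_rat_half[of "1 / of_nat q"] by (simp add: of_rat_divide mult.commute)

lemma L_shifted_unit_fraction: "L (1/2 + 1 / (2 * real q)) = 1 + 1 / of_nat q"
  by (simp add: hamel hamel_coeff_add L_half L_unit_fraction)

lemma pi_of_frac_coeff:
  assumes "L x = of_int n + r" and "0 < r" "r < 1"
  shows "\<pi> x = of_rat r"
  using phi_of_int_add[OF assms(2,3)] by (simp add: pi_eq assms(1))

lemma pi_unit_fraction:
  assumes "2 \<le> q"
  shows "\<pi> (1 / (2 * real q)) = 1 / real q"
  using pi_of_frac_coeff[of _ 0 "1 / of_nat q"] assms by (simp add: L_unit_fraction of_rat_divide)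

lemma pi_shifted_unit_fraction:
  assumes "2 \<le> q"
  shows "\<pi> (1/2 + 1 / (2 * real q)) = 1 / real q"
  using pi_of_frac_coeff[of _ 1 "1 / of_nat q"] assms
  by (simp add: L_shifted_unit_fraction of_rat_divide)

lemma valid: "valid_function (1/2) \<pi>"
  unfolding valid_function_def
proof (intro conjI allI ballI)
  show "0 \<le> \<pi> x" for x by (simp add: pi_eq phi_nonneg)
  fix y assume "y \<in> I_set (1/2)"
  then obtain k where fin: "finite {x. y x \<noteq> 0}"
    and k: "(\<Sum>x\<in>{x. y x \<noteq> 0}. real (y x) * x) = 1/2 + of_int k"
    unfolding I_set_def by (auto elim!: Ints_cases simp: algebra_simps)
  have "(\<Sum>x\<in>{x. y x \<noteq> 0}. of_nat (y x) * L x) = of_int (2 * k + 1)"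
    using arg_cong[OF k, of L]
    by (simp add: hamel hamel_coeff_sum hamel_coeff_of_nat_mult hamel_coeff_add L_half L_of_int)
  then show "1 \<le> (\<Sum>x\<in>{x. y x \<noteq> 0}. \<pi> x * real (y x))"
    using phi_sum_ge_1[OF fin] by (simp add: pi_eq)
qed

context
  fixes \<pi>1 \<pi>2 :: "real \<Rightarrow> real"
  assumes valid1: "valid_function (1/2) \<pi>1" and valid2: "valid_function (1/2) \<pi>2"
    and midpoint: "\<pi> = (\<lambda>x. 1/2 * \<pi>1 x + 1/2 * \<pi>2 x)"
begin

text \<open>Appending \<open>1/2 - \<Sum>xs\<close>, whose coefficient is an even integer so that \<open>\<pi>\<close> vanishes
  there, yields an element of \<open>I\<^sub>b\<close> on which \<open>\<pi>\<close> is tight.\<close>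
lemma tight_if_coeff_sum_odd:
  assumes "sum_list (map L xs) = of_int (2 * j + 1)" and "sum_list (map \<pi> xs) = 1"
  shows "sum_list (map \<pi>1 xs) = 1"
proof -
  define w where "w = 1/2 - sum_list xs"
  have "L w = of_int (2 * - j)"
    using assms(1) by (simp add: w_def hamel hamel_coeff_diff hamel_coeff_sum_list L_half)
  then have pi_w: "\<pi> w = 0" using phi_of_int_even[of "2 * - j"] by (simp add: pi_eq)
  have "sum_list (map \<pi>1 (w # xs)) = 1"
  proof (rule valid_midpoint_tight[OF valid1 valid2 midpoint])
    show "sum_list (w # xs) - 1/2 \<in> \<int>" by (simp add: w_def)
    show "sum_list (map \<pi> (w # xs)) = 1" by (simp add: pi_w assms(2))
  qed
  moreover have "\<pi>1 w = 0" by (rule valid_midpoint_zero[OF valid1 valid2 midpoint pi_w])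
  ultimately show ?thesis by simp
qed

lemma pi1_unit_fraction:
  assumes "2 \<le> q"
  shows "\<pi>1 (1 / (2 * real q)) = 1 / real q"
proof -
  define c where "c = 1 / (2 * real q)"
  have "sum_list (map \<pi>1 (replicate q c)) = 1"
    using assms by (intro tight_if_coeff_sum_odd[where j = 0])
      (simp_all add: c_def L_unit_fraction pi_unit_fraction sum_list_replicate)
  then have "real q * \<pi>1 c = 1" by (simp add: sum_list_replicate)
  then show ?thesis unfolding c_def[symmetric] using assms by (simp add: field_simps)
qed

lemma pi1_shifted_unit_fraction:
  assumes "2 \<le> q"
  shows "\<pi>1 (1/2 + 1 / (2 * real q)) = 1 / real q"
proof -
  define c where "c = 1 / (2 * real q)"
  define d where "d = 1/2 + c"
  have L_c: "L c = 1 / of_nat q" and L_d: "L d = 1 + 1 / of_nat q"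
    and pi_c: "\<pi> c = 1 / real q" and pi_d: "\<pi> d = 1 / real q"
    and pi1_c: "\<pi>1 c = 1 / real q"
    unfolding d_def c_def using assms
    by (simp_all add: L_unit_fraction L_shifted_unit_fraction pi_unit_fraction
        pi_shifted_unit_fraction pi1_unit_fraction)
  have "sum_list (map \<pi>1 (d # d # replicate (q - 2) c)) = 1"
    using assms by (intro tight_if_coeff_sum_odd[where j = 1])
      (simp_all add: L_c L_d pi_c pi_d sum_list_replicate field_simps)
  then have "2 * \<pi>1 d + real (q - 2) / real q = 1" by (simp add: sum_list_replicate pi1_c)
  then show ?thesis unfolding c_def[symmetric] d_def[symmetric] using assms by (simp add: field_simps)
qed

lemma pi1_eq_at_int_coeff:
  assumes "L x = of_int k"
  shows "\<pi>1 x = \<pi> x"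
proof (cases "even k")
  case True
  then have "\<pi> x = 0" by (simp add: pi_eq assms phi_of_int_even)
  then show ?thesis using valid_midpoint_zero[OF valid1 valid2 midpoint] by simp
next
  case False
  then obtain i where k: "k = 2 * i + 1" by (metis oddE)
  have "\<pi> x = 1" using False by (simp add: pi_eq assms phi_of_int_odd)
  moreover from this have "sum_list (map \<pi>1 [x]) = 1"
    by (intro tight_if_coeff_sum_odd[where j = i]) (simp_all add: assms k)
  ultimately show ?thesis by simp
qed

lemma pi1_eq_at_frac_coeff:
  assumes L_x: "L x = of_int n + of_nat p / of_nat q" and "0 < p" "p < q"
  shows "\<pi>1 x = \<pi> x"
proof -
  define c where "c = 1 / (2 * real q)"
  define d where "d = 1/2 + c"
  have q: "2 \<le> q" "p \<le> q" using assms by simp_all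
  have L_c: "L c = 1 / of_nat q" and L_d: "L d = 1 + 1 / of_nat q"
    and pi_c: "\<pi> c = 1 / real q" and pi_d: "\<pi> d = 1 / real q"
    and pi1_c: "\<pi>1 c = 1 / real q" and pi1_d: "\<pi>1 d = 1 / real q"
    unfolding d_def c_def using q
    by (simp_all add: L_unit_fraction L_shifted_unit_fraction pi_unit_fraction
        pi_shifted_unit_fraction pi1_unit_fraction pi1_shifted_unit_fraction)
  have pi_x: "\<pi> x = real p / real q"
    using pi_of_frac_coeff[OF L_x] assms by (simp add: of_rat_divide)
  show ?thesis
  proof (cases "even n")
    case True
    then obtain i where n: "n = 2 * i" by (metis evenE)
    have "sum_list (map \<pi>1 (x # replicate (q - p) c)) = 1"
      using q by (intro tight_if_coeff_sum_odd[where j = i])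
        (simp_all add: L_x L_c n pi_x pi_c sum_list_replicate field_simps)
    then show ?thesis using q by (simp add: pi_x pi1_c sum_list_replicate field_simps)
  next
    case False
    then obtain i where n: "n = 2 * i + 1" by (metis oddE)
    have "sum_list (map \<pi>1 (x # d # replicate (q - p - 1) c)) = 1"
      using q assms by (intro tight_if_coeff_sum_odd[where j = "i + 1"])
        (simp_all add: L_x L_c L_d n pi_x pi_c pi_d sum_list_replicate field_simps)
    then show ?thesis using q assms by (simp add: pi_x pi1_c pi1_d sum_list_replicate field_simps)
  qed
qed

lemma pi1_eq: "\<pi>1 = \<pi>"
proof
  fix x
  show "\<pi>1 x = \<pi> x"
  proof (cases "L x \<in> \<int>")
    case True
    then show ?thesis by (metis Ints_cases pi1_eq_at_int_coeff)
  next
    case False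
    then show ?thesis by (metis rat_eq_of_int_add_fraction pi1_eq_at_frac_coeff)
  qed
qed

end

end

theorem mainTheorem3:
  fixes B :: "real set" and \<pi> :: "real \<Rightarrow> real"
  assumes "hamel_basis B" and "(1/2 :: real) \<in> B"
    and "\<And>x. \<pi> x = (let l = hamel_coeff B x (1/2) in
                 if (\<exists>k::int. l = of_int k \<and> odd k) then 1
                 else of_rat (l - of_int \<lfloor>l\<rfloor>))"
  shows "extreme_function (1/2) \<pi>"
proof -
  interpret half_coefficient_function B \<pi>
    using assms by unfold_locales (simp_all add: phi_def Let_def)
  show ?thesis by (rule extreme_functionI[OF valid pi1_eq])
qed

end
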